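(* $(U_0,\alpha_N)$ is a corecursive algebra for $N\otimes-$ on $\mathsf{SquaMS}$, and $(U_0,\alpha_N^{-1})$ is a final coalgebra for this same functor.
   Context: Let $M_0=\{(r,s)\in[0,1]^2: r\in\{0,1\}\text{ or } s\in\{0,1\}\}$. A square metric space is a pair $(X,S_X)$ with $X$ a metric space with all distances at most $2$ and $S_X\colon M_0\to X$ injective such that (sq1) for $i\in\{0,1\}$, $r,s\in[0,1]$: $d_X(S_X(i,r),S_X(i,s))=|s-r|$ and $d_X(S_X(r,i),S_X(s,i))=|s-r|$; (sq2) $d_X(S_X(r,s),S_X(t,u))\ge|r-t|+|s-u|$. $\mathsf{SquaMS}$: these objects, with short maps $f$ satisfying $f\circ S_X=S_Y$ as morphisms. Let $N=\{0,1,2\}^2$, also viewed as points of $\mathbb{R}^2$. For $X$ in $\mathsf{SquaMS}$, $N\otimes X=(N\times X)/\!\sim$, where $\sim$ is generated by $(m,S_X(p))\sim(n,S_X(q))$ whenever $m,n\in N$ differ by exactly $1$ in exactly one coordinate and $(m+p)/3=(n+q)/3$; $n\otimes x$ is the class of $(n,x)$. With $d((a,u),(b,v))=\frac13 d_X(u,v)$ if $a=b$ and $2$ otherwise, $N\otimes X$ gets the quotient metric (infimum over finite chains of sums of consecutive distances, $\sim$-related consecutive pairs counting $0$). $S_{N\otimes X}(p)=n\otimes S_X(3p-n)$ for any $n\in N$ with $p\in(n+[0,1]^2)/3$; $(N\otimes f)(n\otimes x)=n\otimes f(x)$. $U_0=[0,1]^2$ with the taxicab metric $d((x,y),(x',y'))=|x-x'|+|y-y'|$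 and $S_{U_0}$ the inclusion of $M_0$. $\alpha_N\colon N\otimes U_0\to U_0$, $\alpha_N(n\otimes z)=\frac13(n+z)$ (an isomorphism). An algebra $(A,a\colon FA\to A)$ is corecursive if for every coalgebra $e\colon X\to FX$ there is a unique morphism $e^\dagger\colon X\to A$ with $e^\dagger=a\circ Fe^\dagger\circ e$. A final coalgebra admits a unique coalgebra morphism from every coalgebra. *)

theory Defs
  imports Complex_Main
begin

definition M0 :: "(real \<times> real) set" where
  "M0 = {(r,s). 0 \<le> r \<and> r \<le> 1 \<and> 0 \<le> s \<and> s \<le> 1 \<and> (r \<in> {0,1} \<or> s \<in> {0,1})}"

definition metric_on :: "'a set \<Rightarrow> ('a \<Rightarrow> 'a \<Rightarrow> real) \<Rightarrow> bool" where
  "metric_on X d \<longleftrightarrow>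
     (\<forall>x\<in>X. \<forall>y\<in>X. 0 \<le> d x y \<and> (d x y = 0 \<longleftrightarrow> x = y) \<and> d x y = d y x) \<and>
     (\<forall>x\<in>X. \<forall>y\<in>X. \<forall>z\<in>X. d x z \<le> d x y + d y z)"

definition square_ms :: "'a set \<Rightarrow> ('a \<Rightarrow> 'a \<Rightarrow> real) \<Rightarrow> (real \<times> real \<Rightarrow> 'a) \<Rightarrow> bool" where
  "square_ms X d S \<longleftrightarrow>
     metric_on X d \<and> (\<forall>x\<in>X. \<forall>y\<in>X. d x y \<le> 2) \<and>
     S ` M0 \<subseteq> X \<and> inj_on S M0 \<and>
     (\<forall>i\<in>{0,1}. \<forall>r\<in>{0..1}. \<forall>s\<in>{0..1}.
        d (S (i,r)) (S (i,s)) = \<bar>s - r\<bar> \<and> d (S (r,i)) (S (s,i)) = \<bar>s - r\<bar>) \<and>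
     (\<forall>p\<in>M0. \<forall>q\<in>M0. d (S p) (S q) \<ge> \<bar>fst p - fst q\<bar> + \<bar>snd p - snd q\<bar>)"

definition sq_morphism ::
  "'a set \<Rightarrow> ('a \<Rightarrow> 'a \<Rightarrow> real) \<Rightarrow> (real \<times> real \<Rightarrow> 'a) \<Rightarrow>
   'b set \<Rightarrow> ('b \<Rightarrow> 'b \<Rightarrow> real) \<Rightarrow> (real \<times> real \<Rightarrow> 'b) \<Rightarrow> ('a \<Rightarrow> 'b) \<Rightarrow> bool" where
  "sq_morphism X dX SX Y dY SY f \<longleftrightarrow>
     f ` X \<subseteq> Y \<and> (\<forall>x\<in>X. \<forall>y\<in>X. dY (f x) (f y) \<le> dX x y) \<and> (\<forall>p\<in>M0. f (SX p) = SY p)"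

definition Nidx :: "(nat \<times> nat) set" where
  "Nidx = {0,1,2} \<times> {0,1,2}"

definition adjacent :: "nat \<times> nat \<Rightarrow> nat \<times> nat \<Rightarrow> bool" where
  "adjacent m n \<longleftrightarrow>
     (fst m = fst n \<and> (snd m = snd n + 1 \<or> snd n = snd m + 1)) \<or>
     (snd m = snd n \<and> (fst m = fst n + 1 \<or> fst n = fst m + 1))"

definition gen_rel :: "'a set \<Rightarrow> (real \<times> real \<Rightarrow> 'a) \<Rightarrow> (((nat \<times> nat) \<times> 'a) \<times> ((nat \<times> nat) \<times> 'a)) set" where
  "gen_rel X S = {((m,u),(n,v)). m \<in> Nidx \<and> n \<in> Nidx \<and> u \<in> X \<and> v \<in> X \<and> adjacent m n \<and>
      (\<exists>p\<in>M0. \<exists>q\<in>M0. u = S p \<and> v = S q \<and>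
         (real (fst m) + fst p) / 3 = (real (fst n) + fst q) / 3 \<and>
         (real (snd m) + snd p) / 3 = (real (snd n) + snd q) / 3)}"

definition tensor_rel :: "'a set \<Rightarrow> (real \<times> real \<Rightarrow> 'a) \<Rightarrow> (((nat \<times> nat) \<times> 'a) \<times> ((nat \<times> nat) \<times> 'a)) set" where
  "tensor_rel X S = Id_on (Nidx \<times> X) \<union> (gen_rel X S \<union> (gen_rel X S)\<inverse>)\<^sup>+"

definition tensor_carrier :: "'a set \<Rightarrow> (real \<times> real \<Rightarrow> 'a) \<Rightarrow> ((nat \<times> nat) \<times> 'a) set set" where
  "tensor_carrier X S = (Nidx \<times> X) // tensor_rel X S"

definition tensor_class :: "'a set \<Rightarrow> (real \<times> real \<Rightarrow> 'a) \<Rightarrow> (nat \<times> nat) \<times> 'a \<Rightarrow> ((nat \<times> nat) \<times> 'a) set" where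
  "tensor_class X S z = tensor_rel X S `` {z}"

definition base_dist :: "('a \<Rightarrow> 'a \<Rightarrow> real) \<Rightarrow> (nat \<times> nat) \<times> 'a \<Rightarrow> (nat \<times> nat) \<times> 'a \<Rightarrow> real" where
  "base_dist d a b = (if fst a = fst b then d (snd a) (snd b) / 3 else 2)"

definition chain_cost :: "'a set \<Rightarrow> ('a \<Rightarrow> 'a \<Rightarrow> real) \<Rightarrow> (real \<times> real \<Rightarrow> 'a) \<Rightarrow> ((nat \<times> nat) \<times> 'a) list \<Rightarrow> real" where
  "chain_cost X d S zs =
     sum_list (map2 (\<lambda>a b. if (a, b) \<in> tensor_rel X S then 0 else base_dist d a b) zs (tl zs))"

definition tensor_dist :: "'a set \<Rightarrow> ('a \<Rightarrow> 'a \<Rightarrow> real) \<Rightarrow> (real \<times> real \<Rightarrow> 'a) \<Rightarrow>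
    ((nat \<times> nat) \<times> 'a) set \<Rightarrow> ((nat \<times> nat) \<times> 'a) set \<Rightarrow> real" where
  "tensor_dist X d S c c' =
     Inf {chain_cost X d S zs | zs. zs \<noteq> [] \<and> set zs \<subseteq> Nidx \<times> X \<and> hd zs \<in> c \<and> last zs \<in> c'}"

definition in_cell :: "nat \<times> nat \<Rightarrow> real \<times> real \<Rightarrow> bool" where
  "in_cell n p \<longleftrightarrow>
     real (fst n) \<le> 3 * fst p \<and> 3 * fst p \<le> real (fst n) + 1 \<and>
     real (snd n) \<le> 3 * snd p \<and> 3 * snd p \<le> real (snd n) + 1"

definition cell_of :: "real \<times> real \<Rightarrow> nat \<times> nat" where
  "cell_of p = (SOME n. n \<in> Nidx \<and> in_cell n p)"

definition rescale :: "nat \<times> nat \<Rightarrow> real \<times> real \<Rightarrow> real \<times> real" where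
  "rescale n p = (3 * fst p - real (fst n), 3 * snd p - real (snd n))"

definition tensor_S :: "'a set \<Rightarrow> (real \<times> real \<Rightarrow> 'a) \<Rightarrow> real \<times> real \<Rightarrow> ((nat \<times> nat) \<times> 'a) set" where
  "tensor_S X S p = tensor_class X S (cell_of p, S (rescale (cell_of p) p))"

definition tensor_map :: "'b set \<Rightarrow> (real \<times> real \<Rightarrow> 'b) \<Rightarrow> ('a \<Rightarrow> 'b) \<Rightarrow>
    ((nat \<times> nat) \<times> 'a) set \<Rightarrow> ((nat \<times> nat) \<times> 'b) set" where
  "tensor_map Y SY f c = (let z = (SOME z. z \<in> c) in tensor_class Y SY (fst z, f (snd z)))"

definition U0 :: "(real \<times> real) set" where
  "U0 = {0..1} \<times> {0..1}"

definition taxi :: "real \<times> real \<Rightarrow> real \<times> real \<Rightarrow> real" where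
  "taxi p q = \<bar>fst p - fst q\<bar> + \<bar>snd p - snd q\<bar>"

definition S_U0 :: "real \<times> real \<Rightarrow> real \<times> real" where
  "S_U0 p = p"

definition alphaN :: "((nat \<times> nat) \<times> (real \<times> real)) set \<Rightarrow> real \<times> real" where
  "alphaN c = (let z = (SOME z. z \<in> c) in
      ((real (fst (fst z)) + fst (snd z)) / 3, (real (snd (fst z)) + snd (snd z)) / 3))"

definition alphaN_inv :: "real \<times> real \<Rightarrow> ((nat \<times> nat) \<times> (real \<times> real)) set" where
  "alphaN_inv p = tensor_class U0 S_U0 (cell_of p, rescale (cell_of p) p)"

end

theory Submission
  imports Defs "HOL-Analysis.Product_Vector"
begin

text \<open>
  A map \<open>h : X \<rightarrow> U\<^sub>0\<close> fixing the boundary induces \<open>n \<otimes> x \<mapsto> (n + h x) / 3\<close> on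
  \<open>N \<otimes> X\<close>, and this map is short for the quotient metric: along a chain, each link costs at
  least the taxicab distance between the images of its ends. Hence \<open>h \<mapsto> \<alpha>\<^sub>N \<circ> (N \<otimes> h) \<circ> e\<close>
  sends morphisms \<open>X \<rightarrow> U\<^sub>0\<close> to morphisms and divides their uniform distance by \<open>3\<close>.
  A first morphism exists by McShane extension, so the iterates converge uniformly to a fixed point,
  and the contraction makes it unique: this is corecursiveness.

  The inverse \<open>\<alpha>\<^sub>N\<inverse>\<close> is short because inside one cell the quotient distance is at most
  the taxicab distance, and any two points are joined by a taxicab geodesic made of pieces that
  each lie in one cell. As \<open>\<alpha>\<^sub>N\<close> and \<open>\<alpha>\<^sub>N\<inverse>\<close> are mutually inverse, coalgebra morphisms
  into \<open>(U\<^sub>0, \<alpha>\<^sub>N\<inverse>)\<close> are exactly the solutions of the corecursion equation, which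
  gives finality.
\<close>

section \<open>The quotient \<open>N \<otimes> X\<close>\<close>

lemma equiv_tensor_rel: "equiv (Nidx \<times> X) (tensor_rel X S)"
proof (rule equivI)
  let ?G = "gen_rel X S \<union> (gen_rel X S)\<inverse>"
  have "?G\<^sup>+ \<subseteq> (Nidx \<times> X) \<times> (Nidx \<times> X)"
    by (rule trancl_subset_Sigma) (auto simp: gen_rel_def)
  then show "tensor_rel X S \<subseteq> (Nidx \<times> X) \<times> (Nidx \<times> X)"
    by (auto simp: tensor_rel_def)
  show "refl_on (Nidx \<times> X) (tensor_rel X S)"
    by (auto simp: tensor_rel_def refl_on_def)
  show "sym (tensor_rel X S)"
    unfolding tensor_rel_def by (intro sym_Un sym_Id_on sym_trancl sym_Un_converse)
  show "trans (tensor_rel X S)"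
    unfolding tensor_rel_def trans_def by (auto intro: trancl_trans)
qed

lemma tensor_class_in_carrier: "z \<in> Nidx \<times> X \<Longrightarrow> tensor_class X S z \<in> tensor_carrier X S"
  unfolding tensor_class_def tensor_carrier_def by (rule quotientI)

lemma self_in_tensor_class: "z \<in> Nidx \<times> X \<Longrightarrow> z \<in> tensor_class X S z"
  unfolding tensor_class_def by (rule equiv_class_self[OF equiv_tensor_rel])

lemma tensor_carrier_subset: "c \<in> tensor_carrier X S \<Longrightarrow> c \<subseteq> Nidx \<times> X"
  unfolding tensor_carrier_def by (rule in_quotient_imp_subset[OF equiv_tensor_rel])

lemma some_in_tensor_carrier: "c \<in> tensor_carrier X S \<Longrightarrow> (SOME z. z \<in> c) \<in> c"
  unfolding tensor_carrier_def some_in_eq by (rule in_quotient_imp_non_empty[OF equiv_tensor_rel])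

lemma tensor_carrier_rel:
  "c \<in> tensor_carrier X S \<Longrightarrow> z \<in> c \<Longrightarrow> z' \<in> c \<Longrightarrow> (z, z') \<in> tensor_rel X S"
  unfolding tensor_carrier_def by (rule in_quotient_imp_in_rel[OF equiv_tensor_rel]) auto

lemma tensor_carrier_eq_class:
  assumes "c \<in> tensor_carrier X S" "z \<in> c"
  shows "c = tensor_class X S z"
  using assms unfolding tensor_carrier_def tensor_class_def
  by (metis quotientE equiv_class_eq[OF equiv_tensor_rel] Image_singleton_iff)

lemma tensor_rel_kernel:
  assumes gen: "\<And>a b. (a, b) \<in> gen_rel X S \<Longrightarrow> f a = f b" and "(a, b) \<in> tensor_rel X S"
  shows "f a = f b"
proof -
  let ?K = "{(a, b). f a = f b}"
  have "gen_rel X S \<union> (gen_rel X S)\<inverse> \<subseteq> ?K" using gen by auto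
  moreover have "trans ?K" by (auto simp: trans_def)
  ultimately have "(gen_rel X S \<union> (gen_rel X S)\<inverse>)\<^sup>+ \<subseteq> ?K"
    by (metis trancl_id trancl_mono subrelI)
  then show ?thesis using assms(2) by (auto simp: tensor_rel_def)
qed

lemma sq_morphism_to_U0_iff:
  "sq_morphism X d S U0 taxi S_U0 h \<longleftrightarrow>
     h ` X \<subseteq> U0 \<and> (\<forall>p\<in>M0. h (S p) = p) \<and> (\<forall>x\<in>X. \<forall>y\<in>X. taxi (h x) (h y) \<le> d x y)"
  by (auto simp: sq_morphism_def S_U0_def)

lemma metric_on_U0_taxi: "metric_on U0 taxi"
  unfolding metric_on_def taxi_def by (auto simp: prod_eq_iff)

lemma diam_U0: "p \<in> U0 \<Longrightarrow> q \<in> U0 \<Longrightarrow> taxi p q \<le> 2"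
  by (auto simp: U0_def taxi_def)

text \<open>\<open>glue h (n, x)\<close> is \<open>\<alpha>\<^sub>N ((N \<otimes> h) (n \<otimes> x)) = (n + h x) / 3\<close>, computed on a
  representative.\<close>

definition glue :: "('a \<Rightarrow> real \<times> real) \<Rightarrow> (nat \<times> nat) \<times> 'a \<Rightarrow> real \<times> real" where
  "glue h z = ((real (fst (fst z)) + fst (h (snd z))) / 3, (real (snd (fst z)) + snd (h (snd z))) / 3)"

lemma glue_respects_tensor_rel:
  assumes "\<forall>p\<in>M0. h (S p) = p" and "(a, b) \<in> tensor_rel X S"
  shows "glue h a = glue h b"
  by (rule tensor_rel_kernel[OF _ assms(2)]) (use assms(1) in \<open>auto simp: gen_rel_def glue_def\<close>)

lemma glue_eq_in_class:
  assumes "\<forall>p\<in>M0. h (S p) = p" "c \<in> tensor_carrier X S" "z \<in> c" "z' \<in> c"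
  shows "glue h z = glue h z'"
  using assms glue_respects_tensor_rel tensor_carrier_rel by metis

lemma glue_in_U0: "h x \<in> U0 \<Longrightarrow> n \<in> Nidx \<Longrightarrow> glue h (n, x) \<in> U0"
  by (auto simp: glue_def U0_def Nidx_def)

lemma taxi_glue_same_cell:
  "taxi (glue h (n, x)) (glue h' (n, x')) = taxi (h x) (h' x') / 3"
  by (simp add: glue_def taxi_def add_divide_distrib flip: diff_divide_distrib)

lemma alphaN_eq_glue:
  assumes "c \<in> tensor_carrier U0 S_U0" "z \<in> c"
  shows "alphaN c = glue id z"
proof -
  have "alphaN c = glue id (SOME z. z \<in> c)"
    by (simp add: alphaN_def glue_def Let_def)
  also have "\<dots> = glue id z"
    by (rule glue_eq_in_class[OF _ assms(1) some_in_tensor_carrier[OF assms(1)] assms(2)])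
      (simp add: S_U0_def)
  finally show ?thesis .
qed

lemma
  assumes "h ` X \<subseteq> U0" "c \<in> tensor_carrier X S"
  shows tensor_map_in_carrier: "tensor_map U0 S_U0 h c \<in> tensor_carrier U0 S_U0"
    and self_in_tensor_map:
      "(fst (SOME z. z \<in> c), h (snd (SOME z. z \<in> c))) \<in> tensor_map U0 S_U0 h c"
proof -
  have "(SOME z. z \<in> c) \<in> Nidx \<times> X"
    using some_in_tensor_carrier tensor_carrier_subset assms(2) by blast
  then have "(fst (SOME z. z \<in> c), h (snd (SOME z. z \<in> c))) \<in> Nidx \<times> U0"
    using assms(1) by auto
  then show "tensor_map U0 S_U0 h c \<in> tensor_carrier U0 S_U0"
    and "(fst (SOME z. z \<in> c), h (snd (SOME z. z \<in> c))) \<in> tensor_map U0 S_U0 h c"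
    unfolding tensor_map_def Let_def by (auto intro: tensor_class_in_carrier self_in_tensor_class)
qed

lemma alphaN_tensor_map:
  assumes "h ` X \<subseteq> U0" "\<forall>p\<in>M0. h (S p) = p" "c \<in> tensor_carrier X S" "z \<in> c"
  shows "alphaN (tensor_map U0 S_U0 h c) = glue h z"
proof -
  have "alphaN (tensor_map U0 S_U0 h c) = glue h (SOME z. z \<in> c)"
    using alphaN_eq_glue[OF tensor_map_in_carrier self_in_tensor_map, OF assms(1,3) assms(1,3)]
    by (simp add: glue_def)
  also have "\<dots> = glue h z"
    by (rule glue_eq_in_class[OF assms(2,3) some_in_tensor_carrier[OF assms(3)] assms(4)])
  finally show ?thesis .
qed

section \<open>Chains and the quotient metric\<close>

definition tensor_chains :: "'a set \<Rightarrow> ((nat \<times> nat) \<times> 'a) set \<Rightarrow> ((nat \<times> nat) \<times> 'a) set \<Rightarrow>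
    ((nat \<times> nat) \<times> 'a) list set" where
  "tensor_chains X c c' = {zs. zs \<noteq> [] \<and> set zs \<subseteq> Nidx \<times> X \<and> hd zs \<in> c \<and> last zs \<in> c'}"

lemma tensor_dist_eq_INF_chain_cost:
  "tensor_dist X d S c c' = (INF zs\<in>tensor_chains X c c'. chain_cost X d S zs)"
  unfolding tensor_dist_def tensor_chains_def by (rule arg_cong[where f = Inf]) auto

lemma tensor_chains_nonempty:
  assumes "c \<in> tensor_carrier X S" "c' \<in> tensor_carrier X S"
  shows "tensor_chains X c c' \<noteq> {}"
proof -
  obtain z z' where "z \<in> c" "z' \<in> c'" using assms some_in_tensor_carrier by blast
  moreover from this have "set [z, z'] \<subseteq> Nidx \<times> X" using assms tensor_carrier_subset by auto
  ultimately have "[z, z'] \<in> tensor_chains X c c'" by (simp add: tensor_chains_def)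
  then show ?thesis by blast
qed

lemma chain_cost_Cons_Cons:
  "chain_cost X d S (a # b # zs) =
     (if (a, b) \<in> tensor_rel X S then 0 else base_dist d a b) + chain_cost X d S (b # zs)"
  by (simp add: chain_cost_def)

lemma chain_cost_singleton: "chain_cost X d S [a] = 0"
  by (simp add: chain_cost_def)

lemma chain_cost_nonneg:
  assumes "metric_on X d" "set zs \<subseteq> Nidx \<times> X"
  shows "0 \<le> chain_cost X d S zs"
  using assms(2)
proof (induction zs rule: induct_list012)
  case (3 a b zs)
  have "0 \<le> base_dist d a b"
    using assms(1) 3 by (auto simp: base_dist_def metric_on_def)
  with 3 show ?case by (simp add: chain_cost_Cons_Cons)
qed (simp_all add: chain_cost_def)

lemma chain_cost_append:
  "zs \<noteq> [] \<Longrightarrow> ws \<noteq> [] \<Longrightarrow> chain_cost X d S (zs @ ws) =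
     chain_cost X d S zs
     + (if (last zs, hd ws) \<in> tensor_rel X S then 0 else base_dist d (last zs) (hd ws))
     + chain_cost X d S ws"
proof (induction zs rule: induct_list012)
  case (2 a)
  then show ?case by (cases ws) (simp_all add: chain_cost_Cons_Cons chain_cost_singleton)
qed (simp_all add: chain_cost_Cons_Cons)

lemma tensor_dist_le_chain_cost:
  assumes "metric_on X d" "zs \<in> tensor_chains X c c'"
  shows "tensor_dist X d S c c' \<le> chain_cost X d S zs"
  unfolding tensor_dist_eq_INF_chain_cost
proof (rule cINF_lower[OF _ assms(2)])
  show "bdd_below (chain_cost X d S ` tensor_chains X c c')"
    using chain_cost_nonneg[OF assms(1)] by (intro bdd_belowI[of _ 0]) (auto simp: tensor_chains_def)
qed

lemma tensor_dist_triangle: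
  assumes d: "metric_on X d"
    and c: "c \<in> tensor_carrier X S" and c': "c' \<in> tensor_carrier X S"
    and c'': "c'' \<in> tensor_carrier X S"
  shows "tensor_dist X d S c c'' \<le> tensor_dist X d S c c' + tensor_dist X d S c' c''"
proof -
  have concat: "tensor_dist X d S c c'' \<le> chain_cost X d S zs + chain_cost X d S ws"
    if zs: "zs \<in> tensor_chains X c c'" and ws: "ws \<in> tensor_chains X c' c''" for zs ws
  proof -
    have "(last zs, hd ws) \<in> tensor_rel X S"
      using tensor_carrier_rel[OF c'] zs ws by (simp add: tensor_chains_def)
    then have "chain_cost X d S (zs @ ws) = chain_cost X d S zs + chain_cost X d S ws"
      using chain_cost_append[of zs ws X d S] zs ws by (simp add: tensor_chains_def)
    moreover have "zs @ ws \<in> tensor_chains X c c''" using zs ws by (auto simp: tensor_chains_def)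
    ultimately show ?thesis using tensor_dist_le_chain_cost[OF d] by metis
  qed
  have "tensor_dist X d S c c'' - chain_cost X d S ws \<le> tensor_dist X d S c c'"
    if "ws \<in> tensor_chains X c' c''" for ws
    unfolding tensor_dist_eq_INF_chain_cost[of X d S c c']
  proof (rule cINF_greatest[OF tensor_chains_nonempty[OF c c']])
    fix zs assume zs: "zs \<in> tensor_chains X c c'"
    show "tensor_dist X d S c c'' - chain_cost X d S ws \<le> chain_cost X d S zs"
      using concat[OF zs that] by simp
  qed
  then have "tensor_dist X d S c c'' - tensor_dist X d S c c' \<le> tensor_dist X d S c' c''"
    unfolding tensor_dist_eq_INF_chain_cost[of X d S c' c'']
    by (intro cINF_greatest[OF tensor_chains_nonempty[OF c' c'']]) (simp add: algebra_simps)
  then show ?thesis by simp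
qed

context
  fixes X :: "'a set" and d S and h :: "'a \<Rightarrow> real \<times> real"
  assumes into_U0: "h ` X \<subseteq> U0" and boundary: "\<forall>p\<in>M0. h (S p) = p"
    and short: "\<forall>x\<in>X. \<forall>y\<in>X. taxi (h x) (h y) \<le> d x y"
begin

lemma taxi_glue_le_link_cost:
  assumes "a \<in> Nidx \<times> X" "b \<in> Nidx \<times> X"
  shows "taxi (glue h a) (glue h b) \<le> (if (a, b) \<in> tensor_rel X S then 0 else base_dist d a b)"
proof -
  obtain n x n' x' where ab: "a = (n, x)" "b = (n', x')" by fastforce
  have "taxi (glue h a) (glue h b) \<le> base_dist d a b"
  proof (cases "n = n'")
    case True
    then show ?thesis using short assms by (auto simp: ab base_dist_def taxi_glue_same_cell)
  next
    case False
    have "glue h a \<in> U0" "glue h b \<in> U0" using into_U0 assms by (auto simp: ab intro: glue_in_U0)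
    then show ?thesis using False diam_U0 by (simp add: ab base_dist_def)
  qed
  moreover have "(a, b) \<in> tensor_rel X S \<Longrightarrow> glue h a = glue h b"
    by (rule glue_respects_tensor_rel[where h = h and S = S, OF boundary])
  ultimately show ?thesis by (simp add: taxi_def)
qed

lemma taxi_glue_le_chain_cost:
  "zs \<noteq> [] \<Longrightarrow> set zs \<subseteq> Nidx \<times> X \<Longrightarrow>
   taxi (glue h (hd zs)) (glue h (last zs)) \<le> chain_cost X d S zs"
proof (induction zs rule: induct_list012)
  case (3 a b zs)
  have "taxi (glue h a) (glue h (last (b # zs))) \<le>
        taxi (glue h a) (glue h b) + taxi (glue h b) (glue h (last (b # zs)))"
    by (simp add: taxi_def)
  also have "\<dots> \<le> chain_cost X d S (a # b # zs)"
    using taxi_glue_le_link_cost[of a b] 3 by (simp add: chain_cost_Cons_Cons)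
  finally show ?case by simp
qed (simp_all add: chain_cost_singleton taxi_def)

lemma taxi_glue_le_tensor_dist:
  assumes "c \<in> tensor_carrier X S" "c' \<in> tensor_carrier X S" "z \<in> c" "z' \<in> c'"
  shows "taxi (glue h z) (glue h z') \<le> tensor_dist X d S c c'"
  unfolding tensor_dist_eq_INF_chain_cost
proof (rule cINF_greatest[OF tensor_chains_nonempty[OF assms(1,2)]])
  fix zs assume "zs \<in> tensor_chains X c c'"
  then have zs: "zs \<noteq> []" "set zs \<subseteq> Nidx \<times> X" "hd zs \<in> c" "last zs \<in> c'"
    by (simp_all add: tensor_chains_def)
  have "glue h (hd zs) = glue h z" "glue h (last zs) = glue h z'"
    by (rule glue_eq_in_class[OF boundary assms(1) zs(3) assms(3)],
        rule glue_eq_in_class[OF boundary assms(2) zs(4) assms(4)])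
  then show "taxi (glue h z) (glue h z') \<le> chain_cost X d S zs"
    using taxi_glue_le_chain_cost[OF zs(1,2)] by simp
qed

end

section \<open>Cells of the subdivided square\<close>

lemma cell_of_in_cell: "p \<in> U0 \<Longrightarrow> cell_of p \<in> Nidx \<and> in_cell (cell_of p) p"
proof -
  assume "p \<in> U0"
  define third :: "real \<Rightarrow> nat"
    where "third t = (if 3 * t < 1 then 0 else if 3 * t < 2 then 1 else 2)" for t
  have "(third (fst p), third (snd p)) \<in> Nidx \<and> in_cell (third (fst p), third (snd p)) p"
    using \<open>p \<in> U0\<close> by (auto simp: third_def Nidx_def in_cell_def U0_def)
  then show ?thesis unfolding cell_of_def by (rule someI)
qed

lemma rescale_in_U0: "in_cell n p \<Longrightarrow> rescale n p \<in> U0"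
  by (auto simp: in_cell_def rescale_def U0_def)

lemma in_cell_imp_in_U0: "n \<in> Nidx \<Longrightarrow> in_cell n p \<Longrightarrow> p \<in> U0"
  by (cases p) (auto simp: in_cell_def Nidx_def U0_def)

lemma glue_id_rescale: "glue id (n, rescale n p) = p"
  by (simp add: glue_def rescale_def)

lemma rescale_glue_id: "rescale n (glue id (n, z)) = z"
  by (simp add: glue_def rescale_def add_divide_distrib prod_eq_iff)

lemma in_cell_glue_id: "z \<in> U0 \<Longrightarrow> in_cell n (glue id (n, z))"
  by (auto simp: glue_def in_cell_def U0_def)

lemma rescale_in_M0: "p \<in> M0 \<Longrightarrow> in_cell n p \<Longrightarrow> rescale n p \<in> M0"
  by (auto simp: M0_def in_cell_def rescale_def)

lemma in_M0_iff: "p \<in> M0 \<longleftrightarrow> p \<in> U0 \<and> (fst p \<in> {0, 1} \<or> snd p \<in> {0, 1})"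
  by (cases p) (auto simp: M0_def U0_def)

lemma cells_sharing_point_adjacent:
  assumes "in_cell n p" "in_cell m p" "fst n = fst m \<or> snd n = snd m" "n \<noteq> m"
  shows "adjacent n m"
proof -
  have "real (fst n) \<le> real (fst m) + 1" "real (fst m) \<le> real (fst n) + 1"
    "real (snd n) \<le> real (snd m) + 1" "real (snd m) \<le> real (snd n) + 1"
    using assms(1,2) by (auto simp: in_cell_def)
  then show ?thesis using assms(3,4) unfolding adjacent_def prod_eq_iff by linarith
qed

lemma adjacent_cells_gen_rel:
  assumes "n \<in> Nidx" "m \<in> Nidx" "in_cell n p" "in_cell m p" "adjacent n m"
  shows "((n, rescale n p), (m, rescale m p)) \<in> gen_rel U0 S_U0"
proof -
  have "(fst (rescale n p) \<in> {0, 1} \<and> fst (rescale m p) \<in> {0, 1}) \<or>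
        (snd (rescale n p) \<in> {0, 1} \<and> snd (rescale m p) \<in> {0, 1})"
    using assms(3-5) unfolding adjacent_def in_cell_def rescale_def by auto
  then have "rescale n p \<in> M0" "rescale m p \<in> M0"
    using assms(3,4) rescale_in_U0 by (auto simp: in_M0_iff)
  then show ?thesis
    using assms rescale_in_U0 by (simp add: gen_rel_def S_U0_def rescale_def)
qed

lemma cells_sharing_point_rel:
  assumes n: "n \<in> Nidx" "in_cell n p" and m: "m \<in> Nidx" "in_cell m p"
  shows "((n, rescale n p), (m, rescale m p)) \<in> tensor_rel U0 S_U0"
proof -
  have rel: "((n, rescale n p), (m, rescale m p)) \<in> tensor_rel U0 S_U0"
    if "n \<in> Nidx" "in_cell n p" "m \<in> Nidx" "in_cell m p" "fst n = fst m \<or> snd n = snd m" for n m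
  proof (cases "n = m")
    case True
    then show ?thesis
      using that rescale_in_U0 equiv_tensor_rel[of U0 S_U0] by (simp add: equiv_def refl_on_def)
  next
    case False
    then have "((n, rescale n p), (m, rescale m p)) \<in> gen_rel U0 S_U0"
      using that by (intro adjacent_cells_gen_rel cells_sharing_point_adjacent)
    then show ?thesis unfolding tensor_rel_def by (intro UnI2 r_into_trancl UnI1)
  qed
  \<comment> \<open>Diagonal neighbours are linked through the cell in the column of \<open>n\<close> and the row of \<open>m\<close>.\<close>
  define k where "k = (fst n, snd m)"
  have k: "k \<in> Nidx" "in_cell k p"
    using n m unfolding k_def Nidx_def mem_Times_iff in_cell_def by simp_all
  have "((n, rescale n p), (k, rescale k p)) \<in> tensor_rel U0 S_U0"
    by (rule rel) (use n k in \<open>simp_all add: k_def\<close>)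
  moreover have "((k, rescale k p), (m, rescale m p)) \<in> tensor_rel U0 S_U0"
    by (rule rel) (use m k in \<open>simp_all add: k_def\<close>)
  moreover have "trans (tensor_rel U0 S_U0)"
    using equiv_tensor_rel[of U0 S_U0] by (simp add: equiv_def)
  ultimately show ?thesis by (blast dest: transD)
qed

lemma in_alphaN_inv:
  "n \<in> Nidx \<Longrightarrow> in_cell n p \<Longrightarrow> (n, rescale n p) \<in> alphaN_inv p"
  unfolding alphaN_inv_def tensor_class_def
  using cells_sharing_point_rel cell_of_in_cell in_cell_imp_in_U0 by blast

lemma alphaN_inv_in_carrier: "p \<in> U0 \<Longrightarrow> alphaN_inv p \<in> tensor_carrier U0 S_U0"
  unfolding alphaN_inv_def using cell_of_in_cell rescale_in_U0 by (blast intro: tensor_class_in_carrier)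

lemma alphaN_alphaN_inv:
  assumes "p \<in> U0"
  shows "alphaN (alphaN_inv p) = p"
proof -
  have "cell_of p \<in> Nidx" "in_cell (cell_of p) p" using cell_of_in_cell[OF assms] by auto
  then have "alphaN (alphaN_inv p) = glue id (cell_of p, rescale (cell_of p) p)"
    by (intro alphaN_eq_glue alphaN_inv_in_carrier in_alphaN_inv assms)
  then show ?thesis by (simp add: glue_id_rescale)
qed

lemma alphaN_inv_alphaN:
  assumes c: "c \<in> tensor_carrier U0 S_U0"
  shows "alphaN_inv (alphaN c) = c"
proof -
  obtain n z where nz: "n \<in> Nidx" "z \<in> U0" "c = tensor_class U0 S_U0 (n, z)"
    using c unfolding tensor_carrier_def tensor_class_def by (auto elim: quotientE)
  define p where "p = glue id (n, z)"
  have "alphaN c = p"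
    unfolding p_def using alphaN_eq_glue c nz self_in_tensor_class by blast
  moreover have "alphaN_inv p = tensor_class U0 S_U0 (n, z)"
  proof -
    have "in_cell n p" by (simp add: p_def in_cell_glue_id nz(2))
    then have "(n, z) \<in> alphaN_inv p"
      using in_alphaN_inv[OF nz(1) \<open>in_cell n p\<close>] by (simp add: p_def rescale_glue_id)
    moreover have "alphaN_inv p \<in> tensor_carrier U0 S_U0"
      using \<open>in_cell n p\<close> nz(1) by (intro alphaN_inv_in_carrier in_cell_imp_in_U0)
    ultimately show ?thesis by (simp add: tensor_carrier_eq_class)
  qed
  ultimately show ?thesis using nz(3) by simp
qed

lemma taxi_rescale: "taxi (rescale n a) (rescale n b) = 3 * taxi a b"
  unfolding taxi_def rescale_def by (simp add: abs_if)

lemma alphaN_inv_dist_le_taxi_in_cell: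
  assumes n: "n \<in> Nidx" and a: "in_cell n a" and b: "in_cell n b"
  shows "tensor_dist U0 taxi S_U0 (alphaN_inv a) (alphaN_inv b) \<le> taxi a b"
proof -
  let ?zs = "[(n, rescale n a), (n, rescale n b)]"
  have "?zs \<in> tensor_chains U0 (alphaN_inv a) (alphaN_inv b)"
    using n rescale_in_U0[OF a] rescale_in_U0[OF b] in_alphaN_inv[OF n a] in_alphaN_inv[OF n b]
    by (simp add: tensor_chains_def)
  then have "tensor_dist U0 taxi S_U0 (alphaN_inv a) (alphaN_inv b) \<le> chain_cost U0 taxi S_U0 ?zs"
    by (rule tensor_dist_le_chain_cost[OF metric_on_U0_taxi])
  also have "\<dots> \<le> base_dist taxi (n, rescale n a) (n, rescale n b)"
    by (simp add: chain_cost_Cons_Cons chain_cost_singleton base_dist_def taxi_def)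
  also have "\<dots> = taxi a b"
    by (simp add: base_dist_def taxi_rescale)
  finally show ?thesis .
qed

definition same_third :: "real \<Rightarrow> real \<Rightarrow> bool" where
  "same_third s t \<longleftrightarrow>
     (\<exists>i\<in>{0, 1, 2 :: nat}. real i \<le> 3 * s \<and> 3 * s \<le> real i + 1 \<and> real i \<le> 3 * t \<and> 3 * t \<le> real i + 1)"

lemma same_third_iff:
  assumes "0 \<le> s" "s \<le> 1" "0 \<le> t" "t \<le> 1"
  shows "same_third s t \<longleftrightarrow>
    (s \<le> 1/3 \<and> t \<le> 1/3) \<or> (1/3 \<le> s \<and> s \<le> 2/3 \<and> 1/3 \<le> t \<and> t \<le> 2/3) \<or> (2/3 \<le> s \<and> 2/3 \<le> t)"
  using assms by (auto simp: same_third_def)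

lemma same_third_refl: "0 \<le> s \<Longrightarrow> s \<le> 1 \<Longrightarrow> same_third s s"
  by (auto simp: same_third_def)

lemma third_steps:
  assumes "0 \<le> s" "s \<le> 1" "0 \<le> t" "t \<le> 1"
  obtains w1 w2 where "0 \<le> w1" "w1 \<le> 1" "0 \<le> w2" "w2 \<le> 1"
    "\<bar>s - w1\<bar> + \<bar>w1 - w2\<bar> + \<bar>w2 - t\<bar> = \<bar>s - t\<bar>"
    "same_third s w1" "same_third w1 w2" "same_third w2 t"
proof (cases "s \<le> t")
  case True
  let ?w1 = "max s (min t (1/3))" and ?w2 = "max s (min t (2/3))"
  have "same_third s ?w1" "same_third ?w1 ?w2" "same_third ?w2 t"
    using assms True by (subst same_third_iff; auto simp: max_def min_def)+
  moreover have "0 \<le> ?w1" "?w1 \<le> 1" "0 \<le> ?w2" "?w2 \<le> 1"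
    "\<bar>s - ?w1\<bar> + \<bar>?w1 - ?w2\<bar> + \<bar>?w2 - t\<bar> = \<bar>s - t\<bar>"
    using assms True by (auto simp: max_def min_def)
  ultimately show ?thesis by (intro that)
next
  case False
  let ?w1 = "max t (min s (2/3))" and ?w2 = "max t (min s (1/3))"
  have "same_third s ?w1" "same_third ?w1 ?w2" "same_third ?w2 t"
    using assms False by (subst same_third_iff; auto simp: max_def min_def)+
  moreover have "0 \<le> ?w1" "?w1 \<le> 1" "0 \<le> ?w2" "?w2 \<le> 1"
    "\<bar>s - ?w1\<bar> + \<bar>?w1 - ?w2\<bar> + \<bar>?w2 - t\<bar> = \<bar>s - t\<bar>"
    using assms False by (auto simp: max_def min_def)
  ultimately show ?thesis by (intro that)
qed

lemma common_cell:
  assumes "same_third (fst a) (fst b)" "same_third (snd a) (snd b)"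
  obtains n where "n \<in> Nidx" "in_cell n a" "in_cell n b"
proof -
  obtain i j where "i \<in> {0, 1, 2}" "j \<in> {0, 1, 2}"
    "real i \<le> 3 * fst a" "3 * fst a \<le> real i + 1" "real i \<le> 3 * fst b" "3 * fst b \<le> real i + 1"
    "real j \<le> 3 * snd a" "3 * snd a \<le> real j + 1" "real j \<le> 3 * snd b" "3 * snd b \<le> real j + 1"
    using assms unfolding same_third_def by blast
  moreover from this have "(i, j) \<in> Nidx" unfolding Nidx_def by (intro SigmaI)
  ultimately show thesis by (intro that[of "(i, j)"]) (simp_all add: in_cell_def)
qed

lemma alphaN_sq_morphism:
  "sq_morphism (tensor_carrier U0 S_U0) (tensor_dist U0 taxi S_U0) (tensor_S U0 S_U0)
     U0 taxi S_U0 alphaN"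
  unfolding sq_morphism_def
proof (intro conjI ballI subsetI)
  fix q assume "q \<in> alphaN ` tensor_carrier U0 S_U0"
  then obtain c where c: "c \<in> tensor_carrier U0 S_U0" "q = alphaN c" by blast
  obtain z where z: "z \<in> c" using some_in_tensor_carrier[OF c(1)] by blast
  then have "z \<in> Nidx \<times> U0" using tensor_carrier_subset[OF c(1)] by blast
  then show "q \<in> U0"
    using alphaN_eq_glue[OF c(1) z] c(2) by (cases z) (simp add: glue_in_U0)
next
  fix c c' assume c: "c \<in> tensor_carrier U0 S_U0" and c': "c' \<in> tensor_carrier U0 S_U0"
  obtain z z' where "z \<in> c" "z' \<in> c'" using c c' some_in_tensor_carrier by blast
  then show "taxi (alphaN c) (alphaN c') \<le> tensor_dist U0 taxi S_U0 c c'"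
    using taxi_glue_le_tensor_dist[of id U0 S_U0 taxi, OF _ _ _ c c']
    by (simp add: S_U0_def alphaN_eq_glue[OF c] alphaN_eq_glue[OF c'])
next
  fix p assume "p \<in> M0"
  then have "p \<in> U0" by (auto simp: M0_def U0_def)
  then have z: "(cell_of p, rescale (cell_of p) p) \<in> Nidx \<times> U0"
    using cell_of_in_cell rescale_in_U0 by blast
  show "alphaN (tensor_S U0 S_U0 p) = S_U0 p"
    by (simp only: tensor_S_def S_U0_def)
      (simp add: alphaN_eq_glue[OF tensor_class_in_carrier[OF z] self_in_tensor_class[OF z]]
        glue_id_rescale)
qed

lemma le_abs_diff_if_le_in_thirds:
  fixes D :: "real \<Rightarrow> real \<Rightarrow> real"
  assumes triangle: "\<And>r s t. r \<in> {0..1} \<Longrightarrow> s \<in> {0..1} \<Longrightarrow> t \<in> {0..1} \<Longrightarrow> D r t \<le> D r s + D s t"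
    and in_third: "\<And>s t. same_third s t \<Longrightarrow> D s t \<le> \<bar>s - t\<bar>"
    and "s \<in> {0..1}" "t \<in> {0..1}"
  shows "D s t \<le> \<bar>s - t\<bar>"
proof -
  have "0 \<le> s" "s \<le> 1" "0 \<le> t" "t \<le> 1" using assms(3,4) by auto
  then obtain w1 w2 where w: "0 \<le> w1" "w1 \<le> 1" "0 \<le> w2" "w2 \<le> 1"
    "\<bar>s - w1\<bar> + \<bar>w1 - w2\<bar> + \<bar>w2 - t\<bar> = \<bar>s - t\<bar>"
    "same_third s w1" "same_third w1 w2" "same_third w2 t"
    by (rule third_steps)
  have "D s t \<le> D s w1 + D w1 w2 + D w2 t"
    using triangle[of s w1 t] triangle[of w1 w2 t] assms(3,4) w(1-4) by fastforce
  also have "\<dots> \<le> \<bar>s - w1\<bar> + \<bar>w1 - w2\<bar> + \<bar>w2 - t\<bar>"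
    using in_third w(6-8) by (intro add_mono)
  finally show ?thesis using w(5) by simp
qed

lemma le_taxi_if_le_taxi_in_cells:
  fixes D :: "real \<times> real \<Rightarrow> real \<times> real \<Rightarrow> real"
  assumes triangle: "\<And>a b c. a \<in> U0 \<Longrightarrow> b \<in> U0 \<Longrightarrow> c \<in> U0 \<Longrightarrow> D a c \<le> D a b + D b c"
    and in_cell: "\<And>n a b. n \<in> Nidx \<Longrightarrow> in_cell n a \<Longrightarrow> in_cell n b \<Longrightarrow> D a b \<le> taxi a b"
    and "(p1, p2) \<in> U0" "(q1, q2) \<in> U0"
  shows "D (p1, p2) (q1, q2) \<le> taxi (p1, p2) (q1, q2)"
proof -
  have same_thirds: "D a b \<le> taxi a b"
    if "same_third (fst a) (fst b)" "same_third (snd a) (snd b)" for a b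
    using common_cell[OF that] in_cell by metis
  have bounds: "p1 \<in> {0..1}" "p2 \<in> {0..1}" "q1 \<in> {0..1}" "q2 \<in> {0..1}"
    using assms(3,4) by (auto simp: U0_def)
  have "D (p1, p2) (q1, p2) \<le> \<bar>p1 - q1\<bar>"
  proof (rule le_abs_diff_if_le_in_thirds[where D = "\<lambda>s t. D (s, p2) (t, p2)"])
    show "D (s, p2) (t, p2) \<le> \<bar>s - t\<bar>" if "same_third s t" for s t
      using same_thirds[of "(s, p2)" "(t, p2)"] that same_third_refl bounds by (simp add: taxi_def)
  qed (use triangle bounds in \<open>auto simp: U0_def\<close>)
  moreover have "D (q1, p2) (q1, q2) \<le> \<bar>p2 - q2\<bar>"
  proof (rule le_abs_diff_if_le_in_thirds[where D = "\<lambda>s t. D (q1, s) (q1, t)"])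
    show "D (q1, s) (q1, t) \<le> \<bar>s - t\<bar>" if "same_third s t" for s t
      using same_thirds[of "(q1, s)" "(q1, t)"] that same_third_refl bounds by (simp add: taxi_def)
  qed (use triangle bounds in \<open>auto simp: U0_def\<close>)
  moreover have "D (p1, p2) (q1, q2) \<le> D (p1, p2) (q1, p2) + D (q1, p2) (q1, q2)"
    using triangle bounds by (simp add: U0_def)
  ultimately show ?thesis by (simp add: taxi_def)
qed

lemma alphaN_inv_sq_morphism:
  "sq_morphism U0 taxi S_U0 (tensor_carrier U0 S_U0) (tensor_dist U0 taxi S_U0)
     (tensor_S U0 S_U0) alphaN_inv"
  unfolding sq_morphism_def
proof (intro conjI ballI subsetI)
  show "c \<in> tensor_carrier U0 S_U0" if "c \<in> alphaN_inv ` U0" for c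
    using that alphaN_inv_in_carrier by blast
  show "tensor_dist U0 taxi S_U0 (alphaN_inv p) (alphaN_inv q) \<le> taxi p q"
    if "p \<in> U0" "q \<in> U0" for p q
  proof -
    let ?D = "\<lambda>a b. tensor_dist U0 taxi S_U0 (alphaN_inv a) (alphaN_inv b)"
    have "?D a c \<le> ?D a b + ?D b c" if "a \<in> U0" "b \<in> U0" "c \<in> U0" for a b c
      using that by (intro tensor_dist_triangle metric_on_U0_taxi alphaN_inv_in_carrier)
    then show ?thesis
      using le_taxi_if_le_taxi_in_cells[where D = ?D, of "fst p" "snd p" "fst q" "snd q"]
        alphaN_inv_dist_le_taxi_in_cell that
      by simp
  qed
  show "alphaN_inv (S_U0 p) = tensor_S U0 S_U0 p" for p
    by (simp add: alphaN_inv_def tensor_S_def S_U0_def)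
qed

section \<open>Morphisms into the square\<close>

lemma mcshane_extension:
  fixes u :: "'p \<Rightarrow> real" and S :: "'p \<Rightarrow> 'a"
  assumes d: "metric_on X d" and S: "S ` P \<subseteq> X" and "P \<noteq> {}"
    and lip: "\<And>p q. p \<in> P \<Longrightarrow> q \<in> P \<Longrightarrow> u p \<le> u q + d (S p) (S q)"
    and bound: "\<And>p. p \<in> P \<Longrightarrow> B \<le> u p"
  defines "F \<equiv> \<lambda>x. Inf ((\<lambda>p. u p + d x (S p)) ` P)"
  shows "\<And>x y. x \<in> X \<Longrightarrow> y \<in> X \<Longrightarrow> F x \<le> F y + d x y"
    and "\<And>p. p \<in> P \<Longrightarrow> F (S p) = u p"
proof -
  have d_nonneg: "0 \<le> d x y" if "x \<in> X" "y \<in> X" for x y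
    using d that by (simp add: metric_on_def)
  have d_self: "d x x = 0" if "x \<in> X" for x
    using d that by (simp add: metric_on_def)
  have d_triangle: "d x z \<le> d x y + d y z" if "x \<in> X" "y \<in> X" "z \<in> X" for x y z
    using d that unfolding metric_on_def by blast
  have nonempty: "(\<lambda>p. u p + d x (S p)) ` P \<noteq> {}" for x
    using \<open>P \<noteq> {}\<close> by blast
  have le_F: "F x \<le> u p + d x (S p)" if "x \<in> X" "p \<in> P" for x p
    unfolding F_def
  proof (rule cInf_lower)
    show "bdd_below ((\<lambda>p. u p + d x (S p)) ` P)"
      using bound d_nonneg S that(1) by (intro bdd_belowI[of _ B]) fastforce
  qed (use that(2) in blast)
  show "F x \<le> F y + d x y" if x: "x \<in> X" and y: "y \<in> X" for x y
  proof -
    have "F x - d x y \<le> Inf ((\<lambda>p. u p + d y (S p)) ` P)"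
    proof (rule cInf_greatest[OF nonempty])
      fix t assume "t \<in> (\<lambda>p. u p + d y (S p)) ` P"
      then obtain p where p: "p \<in> P" "t = u p + d y (S p)" by blast
      have "F x \<le> u p + d x (S p)" using le_F x p(1) by blast
      also have "\<dots> \<le> u p + d x y + d y (S p)"
        using d_triangle[OF x y, of "S p"] S p(1) by auto
      finally show "F x - d x y \<le> t" using p(2) by simp
    qed
    then show ?thesis by (simp add: F_def)
  qed
  show "F (S q) = u q" if q: "q \<in> P" for q
  proof (rule antisym)
    have "S q \<in> X" using S q by blast
    then show "F (S q) \<le> u q" using le_F[OF _ q] d_self by fastforce
    show "u q \<le> F (S q)" unfolding F_def
      by (rule cInf_greatest[OF nonempty]) (use lip q in blast)
  qed
qed

lemma abs_half_sum_add_abs_half_diff: "\<bar>(a + b) / 2\<bar> + \<bar>(a - b) / 2\<bar> = max \<bar>a\<bar> \<bar>b\<bar>"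
  for a b :: real
  by (auto simp: abs_if max_def field_simps)

definition square_of_rotated :: "real \<Rightarrow> real \<Rightarrow> real \<times> real" where
  "square_of_rotated u v = (max 0 (min 1 ((u + v) / 2)), max 0 (min 1 ((u - v) / 2)))"

lemma square_of_rotated_in_U0: "square_of_rotated u v \<in> U0"
  by (simp add: square_of_rotated_def U0_def)

lemma square_of_rotated_rotate: "p \<in> U0 \<Longrightarrow> square_of_rotated (fst p + snd p) (fst p - snd p) = p"
  by (auto simp: square_of_rotated_def U0_def prod_eq_iff)

lemma taxi_square_of_rotated_le:
  assumes "\<bar>u - u'\<bar> \<le> r" "\<bar>v - v'\<bar> \<le> r"
  shows "taxi (square_of_rotated u v) (square_of_rotated u' v') \<le> r"
proof -
  have clamp: "\<bar>max 0 (min 1 a) - max 0 (min 1 b)\<bar> \<le> \<bar>a - b\<bar>" for a b :: real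
    by (simp add: max_def min_def abs_if)
  have "taxi (square_of_rotated u v) (square_of_rotated u' v')
        \<le> \<bar>(u + v) / 2 - (u' + v') / 2\<bar> + \<bar>(u - v) / 2 - (u' - v') / 2\<bar>"
    unfolding square_of_rotated_def taxi_def fst_conv snd_conv by (intro add_mono clamp)
  also have "\<dots> = max \<bar>u - u'\<bar> \<bar>v - v'\<bar>"
  proof -
    have "(u + v) / 2 - (u' + v') / 2 = ((u - u') + (v - v')) / 2"
      "(u - v) / 2 - (u' - v') / 2 = ((u - u') - (v - v')) / 2"
      by (simp_all add: field_simps)
    then show ?thesis by (simp only: abs_half_sum_add_abs_half_diff)
  qed
  finally show ?thesis using assms by simp
qed

text \<open>In the rotated coordinates \<open>(x + y, x - y)\<close> the taxicab metric is the maximum metric,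
  so a morphism into \<open>U\<^sub>0\<close> is obtained by extending both rotated coordinates of the boundary
  as \<open>1\<close>-Lipschitz functions and mapping back with \<open>square_of_rotated\<close>.\<close>

lemma exists_sq_morphism_to_U0:
  assumes "square_ms X d S"
  shows "\<exists>h. sq_morphism X d S U0 taxi S_U0 h"
proof -
  have d: "metric_on X d" and S: "S ` M0 \<subseteq> X"
    and sq2: "\<And>p q. p \<in> M0 \<Longrightarrow> q \<in> M0 \<Longrightarrow> taxi p q \<le> d (S p) (S q)"
    using assms by (auto simp: square_ms_def taxi_def)
  have M0: "M0 \<noteq> {}" by (auto simp: M0_def intro!: exI[of _ 0])
  define U where "U x = Inf ((\<lambda>p. (fst p + snd p) + d x (S p)) ` M0)" for x
  define V where "V x = Inf ((\<lambda>p. (fst p - snd p) + d x (S p)) ` M0)" for x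
  have lip: "fst p + snd p \<le> fst q + snd q + d (S p) (S q)"
    "fst p - snd p \<le> fst q - snd q + d (S p) (S q)"
    if "p \<in> M0" "q \<in> M0" for p q
    using sq2[OF that] unfolding taxi_def by arith+
  have bound: "-1 \<le> fst p + snd p" "-1 \<le> fst p - snd p" if "p \<in> M0" for p
    using that by (auto simp: M0_def)
  have U: "U x \<le> U y + d x y" if "x \<in> X" "y \<in> X" for x y
    unfolding U_def by (rule mcshane_extension(1)[OF d S M0 lip(1) bound(1) that])
  have V: "V x \<le> V y + d x y" if "x \<in> X" "y \<in> X" for x y
    unfolding V_def by (rule mcshane_extension(1)[OF d S M0 lip(2) bound(2) that])
  have U_S: "U (S p) = fst p + snd p" if "p \<in> M0" for p
    unfolding U_def by (rule mcshane_extension(2)[OF d S M0 lip(1) bound(1) that])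
  have V_S: "V (S p) = fst p - snd p" if "p \<in> M0" for p
    unfolding V_def by (rule mcshane_extension(2)[OF d S M0 lip(2) bound(2) that])
  define h where "h x = square_of_rotated (U x) (V x)" for x
  have "h x \<in> U0" for x by (simp add: h_def square_of_rotated_in_U0)
  moreover have "h (S p) = p" if "p \<in> M0" for p
  proof -
    have "p \<in> U0" using that by (auto simp: M0_def U0_def)
    then show ?thesis by (simp add: h_def U_S[OF that] V_S[OF that] square_of_rotated_rotate)
  qed
  moreover have "taxi (h x) (h y) \<le> d x y" if "x \<in> X" "y \<in> X" for x y
    unfolding h_def
  proof (rule taxi_square_of_rotated_le)
    show "\<bar>U x - U y\<bar> \<le> d x y" "\<bar>V x - V y\<bar> \<le> d x y"
      using U[OF that] U[OF that(2,1)] V[OF that] V[OF that(2,1)] d that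
      by (simp_all add: metric_on_def abs_le_iff)
  qed
  ultimately have "sq_morphism X d S U0 taxi S_U0 h" by (auto simp: sq_morphism_to_U0_iff)
  then show ?thesis by blast
qed

section \<open>Corecursion by contraction\<close>

lemma convergent_if_geometric_steps:
  fixes f :: "nat \<Rightarrow> 'a::banach"
  assumes steps: "\<And>n. norm (f (Suc n) - f n) \<le> C * q ^ n" and "0 \<le> q" "q < 1"
  shows "convergent f"
proof -
  have "summable (\<lambda>n. C * q ^ n)"
    using assms(2,3) by (intro summable_mult summable_geometric) simp
  then have "summable (\<lambda>n. f (Suc n) - f n)"
    by (rule summable_comparison_test'[of _ 0]) (use steps in simp)
  then have "(\<lambda>n. f 0 + (\<Sum>i<n. f (Suc i) - f i)) \<longlonglongrightarrow> f 0 + (\<Sum>n. f (Suc n) - f n)"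
    by (intro tendsto_add tendsto_const summable_LIMSEQ)
  then show ?thesis by (auto simp: sum_lessThan_telescope convergent_def)
qed

lemma norm_diff_le_taxi: "norm (p - q) \<le> taxi p q"
proof -
  have "norm (p - q) = norm (fst p - fst q, snd p - snd q)"
    by (metis fst_diff snd_diff prod.collapse)
  also have "\<dots> \<le> norm (fst p - fst q) + norm (snd p - snd q)"
    by (rule norm_Pair_le)
  finally show ?thesis by (simp add: taxi_def)
qed

lemma taxi_eq_0_iff: "taxi p q = 0 \<longleftrightarrow> p = q"
  by (auto simp: taxi_def prod_eq_iff)

lemma tendsto_taxi [tendsto_intros]:
  "(f \<longlongrightarrow> a) F \<Longrightarrow> (g \<longlongrightarrow> b) F \<Longrightarrow> ((\<lambda>x. taxi (f x) (g x)) \<longlongrightarrow> taxi a b) F"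
  unfolding taxi_def by (intro tendsto_intros)

lemma closed_U0: "closed U0"
  unfolding U0_def by (intro closed_Times closed_atLeastAtMost)

locale square_coalgebra =
  fixes X :: "'a set" and d :: "'a \<Rightarrow> 'a \<Rightarrow> real" and S :: "real \<times> real \<Rightarrow> 'a"
    and e :: "'a \<Rightarrow> ((nat \<times> nat) \<times> 'a) set"
  assumes square: "square_ms X d S"
    and coalgebra: "sq_morphism X d S (tensor_carrier X S) (tensor_dist X d S) (tensor_S X S) e"
begin

abbreviation morphism :: "('a \<Rightarrow> real \<times> real) \<Rightarrow> bool" where
  "morphism h \<equiv> sq_morphism X d S U0 taxi S_U0 h"

definition corec_step :: "('a \<Rightarrow> real \<times> real) \<Rightarrow> 'a \<Rightarrow> real \<times> real" where
  "corec_step h x = alphaN (tensor_map U0 S_U0 h (e x))"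

lemma e_in_carrier: "x \<in> X \<Longrightarrow> e x \<in> tensor_carrier X S"
  using coalgebra by (auto simp: sq_morphism_def)

lemma corec_step_eq_glue:
  assumes "morphism h" "x \<in> X" "z \<in> e x"
  shows "corec_step h x = glue h z"
proof -
  have "h ` X \<subseteq> U0" "\<forall>p\<in>M0. h (S p) = p" using assms(1) by (auto simp: sq_morphism_to_U0_iff)
  then show ?thesis
    unfolding corec_step_def by (rule alphaN_tensor_map[OF _ _ e_in_carrier[OF assms(2)] assms(3)])
qed

lemma e_representative:
  assumes "x \<in> X"
  obtains n u where "(n, u) \<in> e x" "n \<in> Nidx" "u \<in> X"
proof -
  have "(SOME z. z \<in> e x) \<in> e x" "e x \<subseteq> Nidx \<times> X"
    using some_in_tensor_carrier tensor_carrier_subset e_in_carrier[OF assms] by blast+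
  then show thesis using that by (metis mem_Sigma_iff subsetD surj_pair)
qed

lemma corec_step_boundary:
  assumes h: "morphism h" and p: "p \<in> M0"
  shows "corec_step h (S p) = p"
proof -
  have "p \<in> U0" using p by (auto simp: M0_def U0_def)
  define n where "n = cell_of p"
  have n: "n \<in> Nidx" "in_cell n p" using cell_of_in_cell[OF \<open>p \<in> U0\<close>] by (auto simp: n_def)
  have r: "rescale n p \<in> M0" using rescale_in_M0[OF p n(2)] .
  have "S (rescale n p) \<in> X" using square r by (auto simp: square_ms_def)
  then have "(n, S (rescale n p)) \<in> e (S p)"
    using coalgebra p n(1) self_in_tensor_class[of "(n, S (rescale n p))" X S]
    by (auto simp: sq_morphism_def tensor_S_def n_def)
  then have "corec_step h (S p) = glue h (n, S (rescale n p))"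
    using square p by (intro corec_step_eq_glue h) (auto simp: square_ms_def)
  also have "\<dots> = glue id (n, rescale n p)"
    using h r by (simp add: glue_def sq_morphism_to_U0_iff)
  finally show ?thesis by (simp add: glue_id_rescale)
qed

lemma morphism_corec_step:
  assumes h: "morphism h"
  shows "morphism (corec_step h)"
  unfolding sq_morphism_to_U0_iff
proof (intro conjI ballI subsetI)
  have into_U0: "h ` X \<subseteq> U0" and boundary: "\<forall>p\<in>M0. h (S p) = p"
    and short: "\<forall>x\<in>X. \<forall>y\<in>X. taxi (h x) (h y) \<le> d x y"
    using h by (auto simp: sq_morphism_to_U0_iff)
  show "q \<in> U0" if q: "q \<in> corec_step h ` X" for q
  proof -
    obtain x where x: "x \<in> X" "q = corec_step h x" using q by blast
    obtain n u where "(n, u) \<in> e x" "n \<in> Nidx" "u \<in> X" using e_representative[OF x(1)] .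
    then show ?thesis
      using corec_step_eq_glue[OF h x(1)] into_U0 x(2) by (auto intro!: glue_in_U0)
  qed
  show "taxi (corec_step h x) (corec_step h y) \<le> d x y" if xy: "x \<in> X" "y \<in> X" for x y
  proof -
    obtain z z' where z: "z \<in> e x" "z' \<in> e y"
      using e_representative[OF xy(1)] e_representative[OF xy(2)] by metis
    have "taxi (corec_step h x) (corec_step h y) \<le> tensor_dist X d S (e x) (e y)"
      unfolding corec_step_eq_glue[OF h xy(1) z(1)] corec_step_eq_glue[OF h xy(2) z(2)]
      by (rule taxi_glue_le_tensor_dist[OF into_U0 boundary short e_in_carrier e_in_carrier z])
        (use xy in auto)
    also have "\<dots> \<le> d x y" using coalgebra xy by (auto simp: sq_morphism_def)
    finally show ?thesis .
  qed
  show "corec_step h (S p) = p" if "p \<in> M0" for p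
    using h that by (rule corec_step_boundary)
qed

lemma corec_step_contraction:
  assumes h: "morphism h" and h': "morphism h'" and K: "\<forall>y\<in>X. taxi (h y) (h' y) \<le> K"
    and x: "x \<in> X"
  shows "taxi (corec_step h x) (corec_step h' x) \<le> K / 3"
proof -
  obtain n u where nu: "(n, u) \<in> e x" "u \<in> X" using e_representative[OF x] by metis
  have "taxi (corec_step h x) (corec_step h' x) = taxi (h u) (h' u) / 3"
    by (simp add: corec_step_eq_glue[OF h x nu(1)] corec_step_eq_glue[OF h' x nu(1)]
        taxi_glue_same_cell)
  also have "\<dots> \<le> K / 3" using K nu(2) by auto
  finally show ?thesis .
qed

definition corec_approx :: "nat \<Rightarrow> 'a \<Rightarrow> real \<times> real" where
  "corec_approx n = (corec_step ^^ n) (SOME h. morphism h)"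

definition corec :: "'a \<Rightarrow> real \<times> real" where
  "corec x = lim (\<lambda>n. corec_approx n x)"

lemma corec_approx_Suc: "corec_approx (Suc n) = corec_step (corec_approx n)"
  by (simp add: corec_approx_def)

lemma morphism_corec_approx: "morphism (corec_approx n)"
proof (induction n)
  case 0
  show ?case
    using someI_ex[OF exists_sq_morphism_to_U0[OF square]] by (simp add: corec_approx_def)
next
  case (Suc n)
  then show ?case unfolding corec_approx_Suc by (rule morphism_corec_step)
qed

lemma taxi_le_2_if_morphisms: "morphism h \<Longrightarrow> morphism h' \<Longrightarrow> x \<in> X \<Longrightarrow> taxi (h x) (h' x) \<le> 2"
  by (intro diam_U0) (auto simp: sq_morphism_to_U0_iff)

lemma corec_approx_Suc_dist:
  "x \<in> X \<Longrightarrow> taxi (corec_approx (Suc n) x) (corec_approx n x) \<le> 2 * (1/3) ^ n"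
proof (induction n arbitrary: x)
  case 0
  then show ?case by (simp add: taxi_le_2_if_morphisms morphism_corec_approx)
next
  case (Suc n)
  have "taxi (corec_step (corec_approx (Suc n)) x) (corec_step (corec_approx n) x) \<le> 2 * (1/3) ^ n / 3"
    using Suc by (intro corec_step_contraction morphism_corec_approx) auto
  then show ?case by (simp add: corec_approx_Suc)
qed

lemma corec_approx_tendsto: "x \<in> X \<Longrightarrow> (\<lambda>n. corec_approx n x) \<longlonglongrightarrow> corec x"
proof -
  assume x: "x \<in> X"
  have "convergent (\<lambda>n. corec_approx n x)"
  proof (rule convergent_if_geometric_steps)
    show "norm (corec_approx (Suc n) x - corec_approx n x) \<le> 2 * (1/3) ^ n" for n
      using norm_diff_le_taxi corec_approx_Suc_dist[OF x] by (rule order_trans)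
  qed simp_all
  then show ?thesis by (simp add: corec_def convergent_LIMSEQ_iff)
qed

lemma morphism_corec: "morphism corec"
  unfolding sq_morphism_to_U0_iff
proof (intro conjI ballI subsetI)
  have approx: "corec_approx n ` X \<subseteq> U0" "\<forall>p\<in>M0. corec_approx n (S p) = p"
    "\<forall>x\<in>X. \<forall>y\<in>X. taxi (corec_approx n x) (corec_approx n y) \<le> d x y" for n
    using morphism_corec_approx[of n] by (simp_all add: sq_morphism_to_U0_iff)
  show "q \<in> U0" if q: "q \<in> corec ` X" for q
  proof -
    obtain x where "x \<in> X" "q = corec x" using q by blast
    then show ?thesis
      using closed_sequentially[OF closed_U0 _ corec_approx_tendsto] approx(1) by blast
  qed
  show "corec (S p) = p" if p: "p \<in> M0" for p
  proof -
    have "S p \<in> X" using square p by (auto simp: square_ms_def)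
    moreover have "(\<lambda>n. corec_approx n (S p)) = (\<lambda>n. p)" using approx(2) p by simp
    ultimately show ?thesis using corec_approx_tendsto LIMSEQ_const_iff by metis
  qed
  show "taxi (corec x) (corec y) \<le> d x y" if "x \<in> X" "y \<in> X" for x y
    using tendsto_taxi[OF corec_approx_tendsto corec_approx_tendsto, OF that] approx(3) that
    by (intro LIMSEQ_le_const2) auto
qed

lemma corec_fixpoint: "x \<in> X \<Longrightarrow> corec x = corec_step corec x"
proof -
  assume x: "x \<in> X"
  obtain n u where z: "(n, u) \<in> e x" "u \<in> X" using e_representative[OF x] by metis
  have "(\<lambda>k. corec_approx (Suc k) x) \<longlonglongrightarrow> corec x"
    using corec_approx_tendsto[OF x] by (rule LIMSEQ_Suc)
  moreover have "corec_approx (Suc k) x = glue (corec_approx k) (n, u)" for k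
    unfolding corec_approx_Suc by (rule corec_step_eq_glue[OF morphism_corec_approx x z(1)])
  moreover have "(\<lambda>k. glue (corec_approx k) (n, u)) \<longlonglongrightarrow> glue corec (n, u)"
    unfolding glue_def using corec_approx_tendsto z(2) by (auto intro!: tendsto_intros)
  ultimately have "corec x = glue corec (n, u)" using LIMSEQ_unique by auto
  then show ?thesis using corec_step_eq_glue[OF morphism_corec x z(1)] by simp
qed

lemma fixpoint_unique:
  assumes h: "morphism h" "\<forall>x\<in>X. h x = corec_step h x"
    and h': "morphism h'" "\<forall>x\<in>X. h' x = corec_step h' x"
    and x: "x \<in> X"
  shows "h x = h' x"
proof -
  have bound: "\<forall>x\<in>X. taxi (h x) (h' x) \<le> 2 * (1/3) ^ n" for n
  proof (induction n)
    case 0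
    show ?case using taxi_le_2_if_morphisms[OF h(1) h'(1)] by simp
  next
    case (Suc n)
    show ?case using corec_step_contraction[OF h(1) h'(1) Suc] h(2) h'(2) by simp
  qed
  have "(\<lambda>n. 2 * (1/3) ^ n) \<longlonglongrightarrow> (0 :: real)"
    by (intro tendsto_mult_right_zero LIMSEQ_power_zero) simp
  then have "taxi (h x) (h' x) \<le> 0"
    by (rule LIMSEQ_le_const) (use bound x in auto)
  moreover have "0 \<le> taxi (h x) (h' x)" by (simp add: taxi_def)
  ultimately show ?thesis by (simp add: taxi_eq_0_iff)
qed

theorem corecursive:
  "\<exists>h. morphism h \<and> (\<forall>x\<in>X. h x = alphaN (tensor_map U0 S_U0 h (e x))) \<and>
     (\<forall>h'. morphism h' \<and> (\<forall>x\<in>X. h' x = alphaN (tensor_map U0 S_U0 h' (e x))) \<longrightarrow>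
        (\<forall>x\<in>X. h' x = h x))"
  unfolding corec_step_def[symmetric]
proof (intro exI conjI allI impI ballI)
  show "morphism corec" by (rule morphism_corec)
  show "corec x = corec_step corec x" if "x \<in> X" for x
    using that by (rule corec_fixpoint)
  show "h' x = corec x"
    if "morphism h' \<and> (\<forall>x\<in>X. h' x = corec_step h' x)" "x \<in> X" for h' x
    using that morphism_corec corec_fixpoint by (intro fixpoint_unique) auto
qed

lemma coalgebra_eq_iff_algebra_eq:
  assumes h: "morphism h" and x: "x \<in> X"
  shows "alphaN_inv (h x) = tensor_map U0 S_U0 h (e x) \<longleftrightarrow> h x = corec_step h x"
proof -
  have into_U0: "h ` X \<subseteq> U0" using h by (simp add: sq_morphism_to_U0_iff)
  have hx: "alphaN (alphaN_inv (h x)) = h x"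
    using into_U0 x by (intro alphaN_alphaN_inv) blast
  have c: "alphaN_inv (alphaN (tensor_map U0 S_U0 h (e x))) = tensor_map U0 S_U0 h (e x)"
    by (rule alphaN_inv_alphaN[OF tensor_map_in_carrier[OF into_U0 e_in_carrier[OF x]]])
  show ?thesis
    unfolding corec_step_def
  proof
    assume "alphaN_inv (h x) = tensor_map U0 S_U0 h (e x)"
    then show "h x = alphaN (tensor_map U0 S_U0 h (e x))" using hx by metis
  next
    assume "h x = alphaN (tensor_map U0 S_U0 h (e x))"
    then show "alphaN_inv (h x) = tensor_map U0 S_U0 h (e x)" using c by simp
  qed
qed

theorem final:
  "\<exists>h. morphism h \<and> (\<forall>x\<in>X. alphaN_inv (h x) = tensor_map U0 S_U0 h (e x)) \<and>
     (\<forall>h'. morphism h' \<and> (\<forall>x\<in>X. alphaN_inv (h' x) = tensor_map U0 S_U0 h' (e x)) \<longrightarrow>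
        (\<forall>x\<in>X. h' x = h x))"
proof (intro exI conjI allI impI ballI)
  show "morphism corec" by (rule morphism_corec)
  show "alphaN_inv (corec x) = tensor_map U0 S_U0 corec (e x)" if "x \<in> X" for x
    using coalgebra_eq_iff_algebra_eq[OF morphism_corec that] corec_fixpoint[OF that] by simp
  show "h' x = corec x"
    if "morphism h' \<and> (\<forall>x\<in>X. alphaN_inv (h' x) = tensor_map U0 S_U0 h' (e x))" "x \<in> X" for h' x
    using that coalgebra_eq_iff_algebra_eq morphism_corec corec_fixpoint
    by (intro fixpoint_unique) auto
qed

end

theorem mainTheorem6:
  shows
  "sq_morphism (tensor_carrier U0 S_U0) (tensor_dist U0 taxi S_U0) (tensor_S U0 S_U0)
               U0 taxi S_U0 alphaN
   \<and> (\<forall>(X :: 'a set) d S e.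
        square_ms X d S \<and>
        sq_morphism X d S (tensor_carrier X S) (tensor_dist X d S) (tensor_S X S) e \<longrightarrow>
        (\<exists>h. sq_morphism X d S U0 taxi S_U0 h \<and>
              (\<forall>x\<in>X. h x = alphaN (tensor_map U0 S_U0 h (e x))) \<and>
              (\<forall>h'. sq_morphism X d S U0 taxi S_U0 h' \<and>
                    (\<forall>x\<in>X. h' x = alphaN (tensor_map U0 S_U0 h' (e x))) \<longrightarrow>
                    (\<forall>x\<in>X. h' x = h x))))
   \<and> sq_morphism U0 taxi S_U0 (tensor_carrier U0 S_U0) (tensor_dist U0 taxi S_U0)
                 (tensor_S U0 S_U0) alphaN_inv
   \<and> (\<forall>(X :: 'a set) d S e.
        square_ms X d S \<and>
        sq_morphism X d S (tensor_carrier X S) (tensor_dist X d S) (tensor_S X S) e \<longrightarrow>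
        (\<exists>h. sq_morphism X d S U0 taxi S_U0 h \<and>
              (\<forall>x\<in>X. alphaN_inv (h x) = tensor_map U0 S_U0 h (e x)) \<and>
              (\<forall>h'. sq_morphism X d S U0 taxi S_U0 h' \<and>
                    (\<forall>x\<in>X. alphaN_inv (h' x) = tensor_map U0 S_U0 h' (e x)) \<longrightarrow>
                    (\<forall>x\<in>X. h' x = h x))))"
proof -
  have coalgebra: "square_coalgebra X d S e"
    if "square_ms X d S \<and> sq_morphism X d S (tensor_carrier X S) (tensor_dist X d S) (tensor_S X S) e"
    for X :: "'a set" and d S e
    using that by (simp add: square_coalgebra_def)
  show ?thesis
    by (intro conjI allI impI alphaN_sq_morphism alphaN_inv_sq_morphism;
        (erule square_coalgebra.corecursive[OF coalgebra] square_coalgebra.final[OF coalgebra])?)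
qed

end
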